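(* Let $a,b\in\mathbb R$, $\sigma\in(0,1]$ and $t\in[0,1]$. Then \[ \delta\big((1-t)\gamma_{a,\sigma}+t\gamma_{b,\sigma}\big)\le\frac14\big(\sigma^{-1}-1\big)^2-(1-t)\log(1-t)-t\log t, \] with the convention $0\log 0=0$.
   Context: On $\mathbb R$, $\gamma_{a,s}$ denotes the Gaussian measure with mean $a$ and variance $s$, and $\gamma=\gamma_{0,1}$. For a probability measure $\mu$ with density $f=d\mu/d\gamma$, $\delta(\mu)=\frac12\int|f'/f|^2d\mu-\int\log f\,d\mu$ is the log-Sobolev deficit. *)

theory Defs
  imports "HOL-Probability.Probability"
begin

text \<open>Lebesgue density of the Gaussian measure with mean a and VARIANCE s.\<close>
definition gauss_density :: "real \<Rightarrow> real \<Rightarrow> real \<Rightarrow> real" where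
  "gauss_density a s x = normal_density a (sqrt s) x"

definition std_gauss :: "real measure" where
  "std_gauss = density lborel (\<lambda>x. ennreal (std_normal_density x))"

text \<open>Log-Sobolev deficit of the probability measure mu with density f = d mu / d gamma:
  delta = 1/2 int |f'/f|^2 d mu - int log f d mu, where d mu = f d gamma.\<close>
definition ls_deficit :: "(real \<Rightarrow> real) \<Rightarrow> real" where
  "ls_deficit f =
     (1/2) * (\<integral>x. (deriv f x / f x)\<^sup>2 * f x \<partial>std_gauss)
     - (\<integral>x. ln (f x) * f x \<partial>std_gauss)"

definition xlnx :: "real \<Rightarrow> real" where
  "xlnx x = (if x = 0 then 0 else x * ln x)"

end

theory Submission
  imports Defs
begin

text \<open>
  The density of the mixture with respect to \<open>\<gamma>\<close> is the convex combination
  \<open>f = (1 - t) U\<^sub>a + t U\<^sub>b\<close> of the relative densities \<open>U\<^sub>c = d\<gamma>\<^sub>c\<^sub>,\<^sub>\<sigma> / d\<gamma>\<close>.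
  The Fisher term \<open>f'\<^sup>2 / f\<close> is jointly convex in \<open>(f', f)\<close>, and monotonicity of \<open>log\<close> gives
  \<open>f log f \<ge> (1 - t) U\<^sub>a log ((1 - t) U\<^sub>a) + t U\<^sub>b log (t U\<^sub>b)\<close>. Hence the deficit of the mixture
  is at most the average of the deficits of the two Gaussians plus the entropy
  \<open>-(1 - t) log (1 - t) - t log t\<close> of the weights. Each Gaussian deficit equals
  \<open>(1 - \<sigma> + \<sigma> log \<sigma>) / (2\<sigma>)\<close>, which is at most \<open>(\<sigma>\<^sup>-\<^sup>1 - 1)\<^sup>2 / 4\<close> because
  \<open>log \<sigma> \<le> (\<sigma> - 1) - (\<sigma> - 1)\<^sup>2 / 2\<close> on \<open>(0, 1]\<close>.
\<close>

lemma sq_sum_div_sum_le: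
  fixes A B C D :: real
  assumes "0 \<le> C" "0 \<le> D" "0 < C + D"
  shows "(A * C + B * D)\<^sup>2 / (C + D) \<le> A\<^sup>2 * C + B\<^sup>2 * D"
proof -
  have "(A\<^sup>2 * C + B\<^sup>2 * D) * (C + D) - (A * C + B * D)\<^sup>2 = C * D * (A - B)\<^sup>2"
    by (simp add: power2_eq_square algebra_simps)
  moreover have "0 \<le> C * D * (A - B)\<^sup>2" using assms by simp
  ultimately show ?thesis
    using assms(3) by (simp add: divide_le_eq)
qed

lemma mult_ln_mult_le:
  fixes w u v :: real
  assumes "0 \<le> w" "0 < u" "w * u \<le> v"
  shows "w * u * (ln w + ln u) \<le> w * u * ln v"
proof (cases "w = 0")
  case False
  then have "0 < w" "0 < w * u" using assms by simp_all
  moreover have "0 < v"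
    using \<open>0 < w * u\<close> assms(3) by linarith
  ultimately have "ln (w * u) \<le> ln v"
    using assms(3) by simp
  then have "ln w + ln u \<le> ln v"
    using \<open>0 < w\<close> assms by (simp add: ln_mult)
  then show ?thesis
    using \<open>0 < w * u\<close> by (simp add: mult_left_mono)
qed simp

lemma convex_combination_mult_ln_le:
  fixes A B t :: real
  assumes "0 < A" "0 < B" "0 \<le> t" "t \<le> 1"
  shows "((1 - t) * A + t * B) * ln ((1 - t) * A + t * B) \<le> (1 - t) * (A * ln A) + t * (B * ln B)"
proof -
  define f where "f = (1 - t) * A + t * B"
  have "0 < f"
    using assms by (cases "t = 1") (auto simp: f_def intro: add_pos_nonneg)
  have "A * (ln f - ln A) \<le> A * ((f - A) / A)" "B * (ln f - ln B) \<le> B * ((f - B) / B)"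
    using \<open>0 < f\<close> assms by (intro mult_left_mono ln_diff_le; simp)+
  then have "A * (ln f - ln A) \<le> f - A" "B * (ln f - ln B) \<le> f - B"
    using assms by simp_all
  then have "(1 - t) * (A * (ln f - ln A)) + t * (B * (ln f - ln B)) \<le> (1 - t) * (f - A) + t * (f - B)"
    using assms by (intro add_mono mult_left_mono) auto
  then show ?thesis
    by (simp add: f_def algebra_simps)
qed

lemma ln_le_quadratic:
  fixes s :: real
  assumes "0 < s" "s \<le> 1"
  shows "ln s \<le> (s - 1) - (s - 1)\<^sup>2 / 2"
proof -
  let ?h = "\<lambda>x::real. ln x - ((x - 1) - (x - 1)\<^sup>2 / 2)"
  have "?h s \<le> ?h 1"
  proof (rule DERIV_nonneg_imp_nondecreasing[OF assms(2)])
    fix x assume "s \<le> x" "x \<le> 1"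
    then have "0 < x" using assms by simp
    have "DERIV ?h x :> (1 - x)\<^sup>2 / x"
      using \<open>0 < x\<close> by (auto intro!: derivative_eq_intros simp: field_simps power2_eq_square)
    then show "\<exists>y. DERIV ?h x :> y \<and> y \<ge> 0"
      using \<open>0 < x\<close> by auto
  qed
  then show ?thesis by simp
qed

text \<open>The left-hand side is the deficit of \<open>\<gamma>\<^sub>c\<^sub>,\<^sub>s\<close>, for every mean \<open>c\<close>.\<close>
lemma gauss_deficit_le:
  fixes s :: real
  assumes "0 < s" "s \<le> 1"
  shows "(1 - s + s * ln s) / (2 * s) \<le> (1/4) * (1/s - 1)\<^sup>2"
proof -
  have "1 - s + s * ln s \<le> 1 - s + s * ((s - 1) - (s - 1)\<^sup>2 / 2)"
    using ln_le_quadratic[OF assms] assms by simp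
  also have "\<dots> = (1 - s)\<^sup>2 * (1 - s / 2)"
    by (simp add: power2_eq_square field_simps)
  also have "\<dots> = (1 - s)\<^sup>2 / (2 * s) * (2 * s * (1 - s / 2))"
    using assms by (simp add: field_simps)
  also have "\<dots> \<le> (1 - s)\<^sup>2 / (2 * s)"
  proof (rule mult_left_le)
    have "2 * s * (1 - s / 2) = 1 - (1 - s)\<^sup>2"
      by (simp add: power2_eq_square field_simps)
    then show "2 * s * (1 - s / 2) \<le> 1"
      by simp
  qed (use assms in simp)
  finally have "(1 - s + s * ln s) / (2 * s) \<le> (1 - s)\<^sup>2 / (2 * s) / (2 * s)"
    using assms by (intro divide_right_mono) simp_all
  also have "\<dots> = (1/4) * (1/s - 1)\<^sup>2"
    using assms by (simp add: power2_eq_square field_simps)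
  finally show ?thesis .
qed

lemma integrable_between:
  fixes f g h :: "'a \<Rightarrow> real"
  assumes "integrable M g" "integrable M h" "f \<in> borel_measurable M"
    and "\<And>x. x \<in> space M \<Longrightarrow> g x \<le> f x" "\<And>x. x \<in> space M \<Longrightarrow> f x \<le> h x"
  shows "integrable M f"
proof (rule Bochner_Integration.integrable_bound[where f="\<lambda>x. \<bar>g x\<bar> + \<bar>h x\<bar>"])
  show "integrable M (\<lambda>x. \<bar>g x\<bar> + \<bar>h x\<bar>)"
    using assms by auto
  show "AE x in M. norm (f x) \<le> norm (\<bar>g x\<bar> + \<bar>h x\<bar>)"
    using assms(4,5) by (intro AE_I2) fastforce
qed fact

lemma sets_std_gauss [measurable_cong]: "sets std_gauss = sets borel"
  by (simp add: std_gauss_def)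

lemma space_std_gauss [simp]: "space std_gauss = UNIV"
  by (simp add: std_gauss_def)

lemma has_bochner_integral_normal_density_quadratic:
  fixes \<sigma> :: real
  assumes "0 < \<sigma>"
  shows "has_bochner_integral lborel (\<lambda>x. normal_density \<mu> \<sigma> x * (p2 * x\<^sup>2 + p1 * x + p0))
           (p2 * (\<sigma>\<^sup>2 + \<mu>\<^sup>2) + p1 * \<mu> + p0)"
proof -
  have "has_bochner_integral lborel (\<lambda>x. p2 * (normal_density \<mu> \<sigma> x * (x - \<mu>) ^ (2 * 1))
      + (2 * \<mu> * p2 + p1) * (normal_density \<mu> \<sigma> x * x) + (p0 - p2 * \<mu>\<^sup>2) * normal_density \<mu> \<sigma> x)
      (p2 * \<sigma>\<^sup>2 + (2 * \<mu> * p2 + p1) * \<mu> + (p0 - p2 * \<mu>\<^sup>2) * 1)"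
    using normal_moment_even[OF assms, where k=1 and \<mu>=\<mu>] normal_moment_nz_1[OF assms, of \<mu>] assms
    by (intro has_bochner_integral_add has_bochner_integral_mult_right)
       (auto simp: has_bochner_integral_iff)
  then show ?thesis
    by (simp add: power2_eq_square algebra_simps)
qed

definition gauss_rel_density :: "real \<Rightarrow> real \<Rightarrow> real \<Rightarrow> real" where
  "gauss_rel_density s c x = exp (x\<^sup>2 / 2 - (x - c)\<^sup>2 / (2 * s)) / sqrt s"

definition gauss_score :: "real \<Rightarrow> real \<Rightarrow> real \<Rightarrow> real" where
  "gauss_score s c x = x - (x - c) / s"

lemma gauss_rel_density_pos: "0 < s \<Longrightarrow> 0 < gauss_rel_density s c x"
  by (simp add: gauss_rel_density_def)

lemma std_normal_density_mult_gauss_rel_density: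
  assumes "0 < s"
  shows "std_normal_density x * gauss_rel_density s c x = gauss_density c s x"
proof -
  have "std_normal_density x * gauss_rel_density s c x
      = exp (- x\<^sup>2 / 2) * exp (x\<^sup>2 / 2 - (x - c)\<^sup>2 / (2 * s)) / (sqrt (2 * pi) * sqrt s)"
    by (simp add: std_normal_density_def gauss_rel_density_def)
  also have "exp (- x\<^sup>2 / 2) * exp (x\<^sup>2 / 2 - (x - c)\<^sup>2 / (2 * s)) = exp (- (x - c)\<^sup>2 / (2 * s))"
    by (simp add: exp_add[symmetric])
  finally show ?thesis
    using assms by (simp add: gauss_density_def normal_density_def real_sqrt_mult)
qed

lemma ln_gauss_rel_density:
  "0 < s \<Longrightarrow> ln (gauss_rel_density s c x) = x\<^sup>2 / 2 - (x - c)\<^sup>2 / (2 * s) - ln s / 2"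
  by (simp add: gauss_rel_density_def ln_div ln_sqrt)

lemma has_real_derivative_gauss_rel_density:
  assumes "0 < s"
  shows "(gauss_rel_density s c has_real_derivative gauss_score s c x * gauss_rel_density s c x) (at x)"
proof -
  have "((\<lambda>x. exp (x\<^sup>2 / 2 - (x - c)\<^sup>2 / (2 * s))) has_real_derivative
      exp (x\<^sup>2 / 2 - (x - c)\<^sup>2 / (2 * s)) * gauss_score s c x) (at x)"
    using assms by (auto intro!: derivative_eq_intros simp: gauss_score_def field_simps)
  from DERIV_cdivide[OF this, of "sqrt s"] show ?thesis
    by (simp add: gauss_rel_density_def[abs_def] mult.commute)
qed

lemma has_bochner_integral_gauss_rel_density_quadratic:
  assumes "0 < s" and P: "\<And>x. P x = p2 * x\<^sup>2 + p1 * x + p0"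
  shows "has_bochner_integral std_gauss (\<lambda>x. gauss_rel_density s c x * P x) (p2 * (s + c\<^sup>2) + p1 * c + p0)"
  unfolding std_gauss_def
proof (rule has_bochner_integral_density)
  show "(\<lambda>x. gauss_rel_density s c x * P x) \<in> borel_measurable lborel"
    unfolding P gauss_rel_density_def by measurable
  have "(\<lambda>x. std_normal_density x *\<^sub>R (gauss_rel_density s c x * P x))
      = (\<lambda>x. normal_density c (sqrt s) x * (p2 * x\<^sup>2 + p1 * x + p0))"
    using std_normal_density_mult_gauss_rel_density[OF \<open>0 < s\<close>]
    by (simp add: P gauss_density_def mult.assoc[symmetric])
  then show "has_bochner_integral lborel (\<lambda>x. std_normal_density x *\<^sub>R (gauss_rel_density s c x * P x))
      (p2 * (s + c\<^sup>2) + p1 * c + p0)"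
    using has_bochner_integral_normal_density_quadratic[of "sqrt s"] \<open>0 < s\<close> by simp
qed auto

lemma has_bochner_integral_gauss_rel_density:
  "0 < s \<Longrightarrow> has_bochner_integral std_gauss (gauss_rel_density s c) 1"
  using has_bochner_integral_gauss_rel_density_quadratic[of s "\<lambda>_. 1" 0 0 1 c] by simp

lemma has_bochner_integral_gauss_fisher:
  assumes "0 < s"
  shows "has_bochner_integral std_gauss (\<lambda>x. gauss_rel_density s c x * (gauss_score s c x)\<^sup>2)
           ((s - 1)\<^sup>2 / s + c\<^sup>2)"
proof -
  have "has_bochner_integral std_gauss (\<lambda>x. gauss_rel_density s c x * (gauss_score s c x)\<^sup>2)
      ((1 - 1/s)\<^sup>2 * (s + c\<^sup>2) + (2 * (1 - 1/s) * c / s) * c + (c / s)\<^sup>2)"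
    using assms by (intro has_bochner_integral_gauss_rel_density_quadratic)
      (auto simp: gauss_score_def power2_eq_square field_simps)
  moreover have "(1 - 1/s)\<^sup>2 * (s + c\<^sup>2) + (2 * (1 - 1/s) * c / s) * c + (c / s)\<^sup>2 = (s - 1)\<^sup>2 / s + c\<^sup>2"
    using assms by (simp add: power2_eq_square field_simps)
  ultimately show ?thesis by simp
qed

lemma has_bochner_integral_gauss_entropy:
  assumes "0 < s"
  shows "has_bochner_integral std_gauss (\<lambda>x. gauss_rel_density s c x * ln (gauss_rel_density s c x))
           ((s + c\<^sup>2 - 1 - ln s) / 2)"
proof -
  have "has_bochner_integral std_gauss (\<lambda>x. gauss_rel_density s c x * ln (gauss_rel_density s c x))
      ((1/2 - 1/(2 * s)) * (s + c\<^sup>2) + (c / s) * c + (- c\<^sup>2 / (2 * s) - ln s / 2))"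
    using assms by (intro has_bochner_integral_gauss_rel_density_quadratic)
      (auto simp: ln_gauss_rel_density power2_eq_square field_simps)
  moreover have "(1/2 - 1/(2 * s)) * (s + c\<^sup>2) + (c / s) * c + (- c\<^sup>2 / (2 * s) - ln s / 2)
      = (s + c\<^sup>2 - 1 - ln s) / 2"
    using assms by (simp add: power2_eq_square field_simps)
  ultimately show ?thesis by metis
qed

definition gauss_mixture_rel_density :: "real \<Rightarrow> real \<Rightarrow> real \<Rightarrow> real \<Rightarrow> real \<Rightarrow> real" where
  "gauss_mixture_rel_density s a b t x = (1 - t) * gauss_rel_density s a x + t * gauss_rel_density s b x"

lemma gauss_mixture_rel_density_pos:
  assumes "0 < s" "0 \<le> t" "t \<le> 1"
  shows "0 < gauss_mixture_rel_density s a b t x"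
proof -
  have "0 < gauss_rel_density s a x" "0 < gauss_rel_density s b x"
    using gauss_rel_density_pos[OF assms(1)] by auto
  then consider "0 < (1 - t) * gauss_rel_density s a x" "0 \<le> t * gauss_rel_density s b x"
    | "0 \<le> (1 - t) * gauss_rel_density s a x" "0 < t * gauss_rel_density s b x"
    using assms by (cases "t = 1") auto
  then show ?thesis
    unfolding gauss_mixture_rel_density_def by cases linarith+
qed

lemma deriv_gauss_mixture_rel_density:
  assumes "0 < s"
  shows "deriv (gauss_mixture_rel_density s a b t) x
       = (1 - t) * (gauss_score s a x * gauss_rel_density s a x) + t * (gauss_score s b x * gauss_rel_density s b x)"
  unfolding gauss_mixture_rel_density_def[abs_def]
  by (intro DERIV_imp_deriv DERIV_add DERIV_cmult has_real_derivative_gauss_rel_density assms)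

lemma fisher_gauss_mixture_le:
  fixes s t a b :: real
  assumes "0 < s" "0 \<le> t" "t \<le> 1"
  defines "f \<equiv> gauss_mixture_rel_density s a b t"
  shows "(\<integral>x. (deriv f x / f x)\<^sup>2 * f x \<partial>std_gauss) \<le> (1 - t) * ((s - 1)\<^sup>2 / s + a\<^sup>2) + t * ((s - 1)\<^sup>2 / s + b\<^sup>2)"
proof -
  define R where "R x = (1 - t) * (gauss_rel_density s a x * (gauss_score s a x)\<^sup>2)
    + t * (gauss_rel_density s b x * (gauss_score s b x)\<^sup>2)" for x
  have R: "has_bochner_integral std_gauss R ((1 - t) * ((s - 1)\<^sup>2 / s + a\<^sup>2) + t * ((s - 1)\<^sup>2 / s + b\<^sup>2))"
    unfolding R_def[abs_def]
    by (intro has_bochner_integral_add has_bochner_integral_mult_right has_bochner_integral_gauss_fisher assms)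
  then have "integrable std_gauss R"
    by (rule integrable.intros)
  have f_pos: "0 < f x" for x
    using gauss_mixture_rel_density_pos[OF assms(1-3)] by (simp add: f_def)
  define F where "F x = (gauss_score s a x * ((1 - t) * gauss_rel_density s a x)
    + gauss_score s b x * (t * gauss_rel_density s b x))\<^sup>2
    / ((1 - t) * gauss_rel_density s a x + t * gauss_rel_density s b x)" for x
  have F_eq: "(deriv f x / f x)\<^sup>2 * f x = F x" for x
  proof -
    have "(deriv f x / f x)\<^sup>2 * f x = (deriv f x)\<^sup>2 / f x"
      using f_pos[of x] by (simp add: power2_eq_square)
    then show ?thesis
      unfolding F_def f_def deriv_gauss_mixture_rel_density[OF assms(1)]
      by (simp add: gauss_mixture_rel_density_def mult_ac)
  qed
  have F_le: "F x \<le> R x" for x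
  proof -
    have "F x \<le> (gauss_score s a x)\<^sup>2 * ((1 - t) * gauss_rel_density s a x)
        + (gauss_score s b x)\<^sup>2 * (t * gauss_rel_density s b x)"
      unfolding F_def
      using assms f_pos[of x] gauss_rel_density_pos[OF assms(1), of a x] gauss_rel_density_pos[OF assms(1), of b x]
      by (intro sq_sum_div_sum_le) (simp_all add: f_def gauss_mixture_rel_density_def)
    then show ?thesis
      by (simp add: R_def algebra_simps)
  qed
  have F_nonneg: "0 \<le> F x" for x
    using F_eq[of x] f_pos[of x] by (metis less_imp_le mult_nonneg_nonneg zero_le_power2)
  have "integrable std_gauss F"
  proof (rule integrable_between[where g="\<lambda>_. 0" and h=R])
    show "F \<in> borel_measurable std_gauss"
      unfolding F_def gauss_rel_density_def gauss_score_def by measurable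
  qed (use \<open>integrable std_gauss R\<close> F_le F_nonneg in auto)
  then have "(\<integral>x. F x \<partial>std_gauss) \<le> (\<integral>x. R x \<partial>std_gauss)"
    using \<open>integrable std_gauss R\<close> F_le by (intro integral_mono) auto
  then show ?thesis
    using R by (simp add: F_eq has_bochner_integral_integral_eq)
qed

lemma entropy_gauss_mixture_ge:
  fixes s t a b :: real
  assumes "0 < s" "0 \<le> t" "t \<le> 1"
  defines "f \<equiv> gauss_mixture_rel_density s a b t"
  shows "(1 - t) * (ln (1 - t) + (s + a\<^sup>2 - 1 - ln s) / 2) + t * (ln t + (s + b\<^sup>2 - 1 - ln s) / 2)
           \<le> (\<integral>x. ln (f x) * f x \<partial>std_gauss)"
proof -
  let ?U = "gauss_rel_density s"
  define L where "L x = (1 - t) * (ln (1 - t) * ?U a x + ?U a x * ln (?U a x))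
    + t * (ln t * ?U b x + ?U b x * ln (?U b x))" for x
  define H where "H x = (1 - t) * (?U a x * ln (?U a x)) + t * (?U b x * ln (?U b x))" for x
  have L: "has_bochner_integral std_gauss L
      ((1 - t) * (ln (1 - t) * 1 + (s + a\<^sup>2 - 1 - ln s) / 2) + t * (ln t * 1 + (s + b\<^sup>2 - 1 - ln s) / 2))"
    unfolding L_def[abs_def]
    by (intro has_bochner_integral_add has_bochner_integral_mult_right
        has_bochner_integral_gauss_rel_density has_bochner_integral_gauss_entropy assms)
  have "has_bochner_integral std_gauss H
      ((1 - t) * ((s + a\<^sup>2 - 1 - ln s) / 2) + t * ((s + b\<^sup>2 - 1 - ln s) / 2))"
    unfolding H_def[abs_def]
    by (intro has_bochner_integral_add has_bochner_integral_mult_right has_bochner_integral_gauss_entropy assms)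
  then have "integrable std_gauss H"
    by (rule integrable.intros)
  have U_pos: "0 < ?U a x" "0 < ?U b x" for x
    using gauss_rel_density_pos[OF assms(1)] by auto
  have f_eq: "f x = (1 - t) * ?U a x + t * ?U b x" for x
    by (simp add: f_def gauss_mixture_rel_density_def)
  have L_le: "L x \<le> ln (f x) * f x" for x
  proof -
    have "(1 - t) * ?U a x * (ln (1 - t) + ln (?U a x)) \<le> (1 - t) * ?U a x * ln (f x)"
      using assms(1-3) U_pos[of x] by (intro mult_ln_mult_le) (auto simp: f_eq)
    moreover have "t * ?U b x * (ln t + ln (?U b x)) \<le> t * ?U b x * ln (f x)"
      using assms(1-3) U_pos[of x] by (intro mult_ln_mult_le) (auto simp: f_eq)
    ultimately show ?thesis
      by (simp add: L_def f_eq algebra_simps)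
  qed
  \<comment> \<open>this convexity bound only serves to make \<open>f log f\<close> integrable\<close>
  have le_H: "ln (f x) * f x \<le> H x" for x
    using convex_combination_mult_ln_le[OF U_pos[of x] assms(2,3)]
    by (simp add: H_def f_eq mult.commute)
  have "integrable std_gauss (\<lambda>x. ln (f x) * f x)"
  proof (rule integrable_between[where g=L and h=H])
    show "(\<lambda>x. ln (f x) * f x) \<in> borel_measurable std_gauss"
      unfolding f_def gauss_mixture_rel_density_def gauss_rel_density_def by measurable
  qed (use integrable.intros[OF L] \<open>integrable std_gauss H\<close> L_le le_H in auto)
  then have "(\<integral>x. L x \<partial>std_gauss) \<le> (\<integral>x. ln (f x) * f x \<partial>std_gauss)"
    using integrable.intros[OF L] L_le by (intro integral_mono) auto
  then show ?thesis
    using L by (simp add: has_bochner_integral_integral_eq)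
qed

theorem lemma2:
  fixes a b \<sigma> t :: real
  assumes "0 < \<sigma>" "\<sigma> \<le> 1" "0 \<le> t" "t \<le> 1"
  shows "ls_deficit (\<lambda>x. ((1 - t) * gauss_density a \<sigma> x + t * gauss_density b \<sigma> x)
                          / std_normal_density x)
         \<le> (1/4) * (1/\<sigma> - 1)\<^sup>2 - xlnx (1 - t) - xlnx t"
proof -
  define f where "f = gauss_mixture_rel_density \<sigma> a b t"
  have "std_normal_density x \<noteq> 0" for x
    using normal_density_pos[of 1 0 x] by simp
  then have "(\<lambda>x. ((1 - t) * gauss_density a \<sigma> x + t * gauss_density b \<sigma> x) / std_normal_density x) = f"
    by (auto simp: f_def gauss_mixture_rel_density_def field_simps
        std_normal_density_mult_gauss_rel_density[OF assms(1), symmetric])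
  then have "ls_deficit (\<lambda>x. ((1 - t) * gauss_density a \<sigma> x + t * gauss_density b \<sigma> x) / std_normal_density x)
      = 1/2 * (\<integral>x. (deriv f x / f x)\<^sup>2 * f x \<partial>std_gauss) - (\<integral>x. ln (f x) * f x \<partial>std_gauss)"
    by (simp add: ls_deficit_def)
  also have "\<dots> \<le> 1/2 * ((1 - t) * ((\<sigma> - 1)\<^sup>2 / \<sigma> + a\<^sup>2) + t * ((\<sigma> - 1)\<^sup>2 / \<sigma> + b\<^sup>2))
      - ((1 - t) * (ln (1 - t) + (\<sigma> + a\<^sup>2 - 1 - ln \<sigma>) / 2) + t * (ln t + (\<sigma> + b\<^sup>2 - 1 - ln \<sigma>) / 2))"
    using fisher_gauss_mixture_le[OF assms(1,3,4), of a b] entropy_gauss_mixture_ge[OF assms(1,3,4), of a b]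
    unfolding f_def by (intro diff_mono mult_left_mono) simp_all
  also have "\<dots> = (1 - \<sigma> + \<sigma> * ln \<sigma>) / (2 * \<sigma>) - xlnx (1 - t) - xlnx t"
    using assms(1) by (simp add: xlnx_def power2_eq_square field_simps)
  also have "\<dots> \<le> (1/4) * (1/\<sigma> - 1)\<^sup>2 - xlnx (1 - t) - xlnx t"
    using gauss_deficit_le[OF assms(1,2)] by simp
  finally show ?thesis .
qed

end
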